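(* Let $Q$ be a finite quiver, let $A=\Bbbk Q/(\geq 2)$, let $J$ be the ideal of $A$ generated by all loops of $Q$, let $Q'$ be the quiver obtained from $Q$ by deleting all loops, let $C=\Bbbk Q'$ and $B=A/J\cong C/(\geq 2)$. Then there is a one-to-one correspondence between isomorphism classes $$\{\text{brick } A\text{-modules}\}\longleftrightarrow\{\text{brick } C\text{-modules annihilated by the ideal } (\geq 2) \text{ of } C\}.$$ More precisely, every brick $A$-module is annihilated by $J$ (hence is a $B$-module, hence a $C$-module annihilated by $(\geq 2)$), and conversely; and for brick $A$-modules $M,N$ there are natural isomorphisms $$\mathrm{Hom}_A(M,N)\cong \mathrm{Hom}_B(M,N)\cong \mathrm{Hom}_C(M,N).$$
   Context: $\Bbbk$ is an algebraically closed field. For a finite quiver $Q$, the path algebra $\Bbbk Q$ is generated by vertex idempotents $e_i$ and arrows $\alpha$ with $e_ie_j=\delta_{ij}e_i$, $e_i\alpha=\delta_{i,t(\alpha)}\alpha$, $\alpha e_j=\delta_{j,s(\alpha)}\alpha$ (so finite-dimensional left modules are representations of $Q$); $(\geq 2)$ denotes the ideal generated by all paths of length at least $2$. Modules are finite-dimensional left modules. A module $M$ is a brick if $\mathrm{End}(M)=\Bbbk$. A module over a quotient $R/I$ is identified with an $R$-module annihilated by $I$. *)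

theory Defs
  imports "Jordan_Normal_Form.Matrix" "HOL-Computational_Algebra.Polynomial"
begin

text \<open>A finite quiver is given by a finite vertex type 'v, a finite set of arrows E,
  and source/target maps s, t.  A finite-dimensional representation (= left module over
  the path algebra) is a dimension vector d and a matrix M e of size d(t e) x d(s e)
  for every arrow e (arrow e : s e \<rightarrow> t e acts as a map from the space at s e to that at t e).\<close>

definition alg_closed :: "'k::field itself \<Rightarrow> bool" where
  "alg_closed _ \<longleftrightarrow> (\<forall>p::'k poly. degree p \<ge> 1 \<longrightarrow> (\<exists>x. poly p x = 0))"

definition is_rep :: "'e set \<Rightarrow> ('e \<Rightarrow> 'v) \<Rightarrow> ('e \<Rightarrow> 'v) \<Rightarrow> ('v \<Rightarrow> nat) \<Rightarrow> ('e \<Rightarrow> 'k::field mat) \<Rightarrow> bool" where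
  "is_rep E s t d M \<longleftrightarrow> (\<forall>e\<in>E. M e \<in> carrier_mat (d (t e)) (d (s e)))"

text \<open>Annihilated by the ideal (>= 2) generated by all paths of length at least 2:
  every composable pair of arrows acts by zero.\<close>
definition rad2_ann :: "'e set \<Rightarrow> ('e \<Rightarrow> 'v) \<Rightarrow> ('e \<Rightarrow> 'v) \<Rightarrow> ('v \<Rightarrow> nat) \<Rightarrow> ('e \<Rightarrow> 'k::field mat) \<Rightarrow> bool" where
  "rad2_ann E s t d M \<longleftrightarrow> (\<forall>e\<in>E. \<forall>f\<in>E. t e = s f \<longrightarrow> M f * M e = 0\<^sub>m (d (t f)) (d (s e)))"

definition rep_hom :: "'e set \<Rightarrow> ('e \<Rightarrow> 'v) \<Rightarrow> ('e \<Rightarrow> 'v) \<Rightarrow> ('v \<Rightarrow> nat) \<Rightarrow> ('e \<Rightarrow> 'k::field mat)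
    \<Rightarrow> ('v \<Rightarrow> nat) \<Rightarrow> ('e \<Rightarrow> 'k mat) \<Rightarrow> ('v \<Rightarrow> 'k mat) \<Rightarrow> bool" where
  "rep_hom E s t d M d' N \<phi> \<longleftrightarrow> (\<forall>v. \<phi> v \<in> carrier_mat (d' v) (d v)) \<and>
     (\<forall>e\<in>E. \<phi> (t e) * M e = N e * \<phi> (s e))"

definition brick :: "'e set \<Rightarrow> ('e \<Rightarrow> 'v) \<Rightarrow> ('e \<Rightarrow> 'v) \<Rightarrow> ('v \<Rightarrow> nat) \<Rightarrow> ('e \<Rightarrow> 'k::field mat) \<Rightarrow> bool" where
  "brick E s t d M \<longleftrightarrow> (\<exists>v. d v > 0) \<and>
     (\<forall>\<phi>. rep_hom E s t d M d M \<phi> \<longrightarrow> (\<exists>c. \<forall>v. \<phi> v = c \<cdot>\<^sub>m 1\<^sub>m (d v)))"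

definition A_module :: "'e set \<Rightarrow> ('e \<Rightarrow> 'v) \<Rightarrow> ('e \<Rightarrow> 'v) \<Rightarrow> ('v \<Rightarrow> nat) \<Rightarrow> ('e \<Rightarrow> 'k::field mat) \<Rightarrow> bool" where
  "A_module E s t d M \<longleftrightarrow> is_rep E s t d M \<and> rad2_ann E s t d M"

definition nonloops :: "'e set \<Rightarrow> ('e \<Rightarrow> 'v) \<Rightarrow> ('e \<Rightarrow> 'v) \<Rightarrow> 'e set" where
  "nonloops E s t = {e\<in>E. s e \<noteq> t e}"

definition loops_zero :: "'e set \<Rightarrow> ('e \<Rightarrow> 'v) \<Rightarrow> ('e \<Rightarrow> 'v) \<Rightarrow> ('v \<Rightarrow> nat) \<Rightarrow> ('e \<Rightarrow> 'k::field mat) \<Rightarrow> bool" where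
  "loops_zero E s t d M \<longleftrightarrow> (\<forall>e\<in>E. s e = t e \<longrightarrow> M e = 0\<^sub>m (d (t e)) (d (s e)))"

definition extend_by_zero :: "('e \<Rightarrow> 'v) \<Rightarrow> ('e \<Rightarrow> 'v) \<Rightarrow> ('v \<Rightarrow> nat) \<Rightarrow> ('e \<Rightarrow> 'k::field mat) \<Rightarrow> ('e \<Rightarrow> 'k mat)" where
  "extend_by_zero s t d N = (\<lambda>e. if s e = t e then 0\<^sub>m (d (t e)) (d (s e)) else N e)"

end

theory Submission
  imports Defs
begin

text \<open>A loop l at a vertex v of a radical-square-zero representation gives an endomorphism:
  act by M l at v and by 0 elsewhere.  Every arrow into or out of v composes with the loop to 0,
  so this commutes with the representation.  For a brick it must be a scalar, and a scalar
  squaring to zero vanishes, so loops act trivially on bricks.  Once loops act by zero, the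
  commutation conditions at loops hold for every family of maps, so homomorphisms, and with them
  the brick property, are the same over Q and over the loop-free quiver Q'.\<close>

lemma scalar_one_mat_square_zero:
  fixes c :: "'k::field"
  assumes "(c \<cdot>\<^sub>m 1\<^sub>m n) * (c \<cdot>\<^sub>m 1\<^sub>m n) = 0\<^sub>m n n"
  shows "c \<cdot>\<^sub>m 1\<^sub>m n = 0\<^sub>m n n"
proof (cases "n = 0")
  case True
  then show ?thesis by (intro eq_matI) auto
next
  case False
  have "(c \<cdot>\<^sub>m 1\<^sub>m n) * (c \<cdot>\<^sub>m 1\<^sub>m n) = (c * c) \<cdot>\<^sub>m 1\<^sub>m n"
    by auto
  with assms have "(c * c) \<cdot>\<^sub>m 1\<^sub>m n = 0\<^sub>m n n"
    by simp
  then have "((c * c) \<cdot>\<^sub>m 1\<^sub>m n) $$ (0, 0) = 0"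
    using False by simp
  then have "c = 0"
    using False by simp
  then show ?thesis by (intro eq_matI) auto
qed

lemma loop_rep_endomorphism:
  fixes M :: "'e \<Rightarrow> 'k::field mat"
  assumes A: "A_module E s t d M" and l: "l \<in> E" "s l = t l"
  shows "rep_hom E s t d M d M (\<lambda>w. if w = t l then M l else 0\<^sub>m (d w) (d w))"
    (is "rep_hom E s t d M d M ?\<phi>")
proof -
  have car: "\<And>e. e \<in> E \<Longrightarrow> M e \<in> carrier_mat (d (t e)) (d (s e))"
    using A unfolding A_module_def is_rep_def by auto
  have rad2: "\<And>e f. e \<in> E \<Longrightarrow> f \<in> E \<Longrightarrow> t e = s f \<Longrightarrow> M f * M e = 0\<^sub>m (d (t f)) (d (s e))"
    using A unfolding A_module_def rad2_ann_def by auto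
  have "?\<phi> v \<in> carrier_mat (d v) (d v)" for v
    using car[OF l(1)] l(2) by auto
  moreover have "?\<phi> (t e) * M e = M e * ?\<phi> (s e)" if e: "e \<in> E" for e
  proof -
    have into_loop: "?\<phi> (t e) * M e = 0\<^sub>m (d (t e)) (d (s e))"
      using rad2[OF e l(1)] car[OF e] l(2) by auto
    have out_of_loop: "M e * ?\<phi> (s e) = 0\<^sub>m (d (t e)) (d (s e))"
      using rad2[OF l(1) e] car[OF e] l(2) by auto
    show ?thesis using into_loop out_of_loop by simp
  qed
  ultimately show ?thesis unfolding rep_hom_def by blast
qed

lemma brick_loops_zero:
  fixes M :: "'e \<Rightarrow> 'k::field mat"
  assumes A: "A_module E s t d M" and B: "brick E s t d M"
  shows "loops_zero E s t d M"
  unfolding loops_zero_def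
proof (intro ballI impI)
  fix l assume l: "l \<in> E" "s l = t l"
  obtain c where c: "\<And>w. (if w = t l then M l else 0\<^sub>m (d w) (d w)) = c \<cdot>\<^sub>m 1\<^sub>m (d w)"
    using B loop_rep_endomorphism[OF A l] unfolding brick_def by blast
  have scalar: "M l = c \<cdot>\<^sub>m 1\<^sub>m (d (t l))"
    using c[of "t l"] by simp
  have "M l * M l = 0\<^sub>m (d (t l)) (d (t l))"
    using A l unfolding A_module_def rad2_ann_def by auto
  then show "M l = 0\<^sub>m (d (t l)) (d (s l))"
    using scalar_one_mat_square_zero l(2) unfolding scalar by simp
qed

lemma A_module_subset:
  assumes "E' \<subseteq> E" "A_module E s t d M"
  shows "A_module E' s t d M"
  using assms unfolding A_module_def is_rep_def rad2_ann_def by blast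

lemma A_module_extend_by_zero:
  fixes N :: "'e \<Rightarrow> 'k::field mat"
  assumes H: "A_module (nonloops E s t) s t d N"
  shows "A_module E s t d (extend_by_zero s t d N)" (is "A_module E s t d ?X")
proof -
  have car: "?X e \<in> carrier_mat (d (t e)) (d (s e))" if "e \<in> E" for e
    using H that unfolding A_module_def is_rep_def nonloops_def extend_by_zero_def by auto
  have "?X f * ?X e = 0\<^sub>m (d (t f)) (d (s e))" if ef: "e \<in> E" "f \<in> E" "t e = s f" for e f
  proof (cases "s e = t e \<or> s f = t f")
    case True
    then show ?thesis using car[OF ef(1)] car[OF ef(2)] ef(3)
      by (auto simp: extend_by_zero_def)
  next
    case False
    then show ?thesis using H ef unfolding A_module_def rad2_ann_def nonloops_def extend_by_zero_def
      by auto
  qed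
  with car show ?thesis unfolding A_module_def is_rep_def rad2_ann_def by blast
qed

lemma loops_zero_extend_by_zero: "loops_zero E s t d (extend_by_zero s t d N)"
  unfolding loops_zero_def extend_by_zero_def by auto

lemma extend_by_zero_eq_if_loops_zero:
  assumes "loops_zero E s t d M" "e \<in> E"
  shows "extend_by_zero s t d M e = M e"
  using assms unfolding loops_zero_def extend_by_zero_def by auto

lemma rep_hom_nonloops_extend_by_zero:
  "rep_hom (nonloops E s t) s t d (extend_by_zero s t d M) d' (extend_by_zero s t d' N) \<phi>
     \<longleftrightarrow> rep_hom (nonloops E s t) s t d M d' N \<phi>"
  unfolding rep_hom_def nonloops_def extend_by_zero_def by auto

lemma rep_hom_nonloops_iff:
  fixes M N :: "'e \<Rightarrow> 'k::field mat"
  assumes M: "loops_zero E s t d M" and N: "loops_zero E s t d' N"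
  shows "rep_hom E s t d M d' N \<phi> \<longleftrightarrow> rep_hom (nonloops E s t) s t d M d' N \<phi>"
proof
  assume "rep_hom E s t d M d' N \<phi>"
  then show "rep_hom (nonloops E s t) s t d M d' N \<phi>"
    unfolding rep_hom_def nonloops_def by auto
next
  assume h: "rep_hom (nonloops E s t) s t d M d' N \<phi>"
  have "\<phi> (t e) * M e = N e * \<phi> (s e)" if e: "e \<in> E" "s e = t e" for e
  proof -
    have "\<phi> (t e) \<in> carrier_mat (d' (t e)) (d (t e))"
      using h unfolding rep_hom_def by auto
    moreover have "M e = 0\<^sub>m (d (t e)) (d (t e))" "N e = 0\<^sub>m (d' (t e)) (d' (t e))"
      using M N e unfolding loops_zero_def by auto
    ultimately show ?thesis using e(2) by simp
  qed
  with h show "rep_hom E s t d M d' N \<phi>"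
    unfolding rep_hom_def nonloops_def by auto
qed

lemma brick_nonloops_iff:
  assumes "loops_zero E s t d M"
  shows "brick E s t d M \<longleftrightarrow> brick (nonloops E s t) s t d M"
  using rep_hom_nonloops_iff[OF assms assms] unfolding brick_def by simp

theorem theorem1p2:
  fixes E :: "'e set" and s t :: "'e \<Rightarrow> 'v::finite"
  assumes "finite E"
    and "alg_closed TYPE('k::field)"
  shows
    "(\<forall>d (M :: 'e \<Rightarrow> 'k mat). A_module E s t d M \<and> brick E s t d M \<longrightarrow>
        loops_zero E s t d M \<and>
        A_module (nonloops E s t) s t d M \<and> brick (nonloops E s t) s t d M \<and>
        (\<forall>e\<in>E. extend_by_zero s t d M e = M e))
   \<and> (\<forall>d (N :: 'e \<Rightarrow> 'k mat). A_module (nonloops E s t) s t d N \<and> brick (nonloops E s t) s t d N \<longrightarrow>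
        A_module E s t d (extend_by_zero s t d N) \<and> brick E s t d (extend_by_zero s t d N) \<and>
        (\<forall>e\<in>nonloops E s t. extend_by_zero s t d N e = N e))
   \<and> (\<forall>d (M :: 'e \<Rightarrow> 'k mat) d' N. A_module E s t d M \<and> brick E s t d M \<and>
        A_module E s t d' N \<and> brick E s t d' N \<longrightarrow>
        {\<phi>. rep_hom E s t d M d' N \<phi>} = {\<phi>. rep_hom (nonloops E s t) s t d M d' N \<phi>})"
proof (intro conjI allI impI)
  fix d and M :: "'e \<Rightarrow> 'k mat"
  assume H: "A_module E s t d M \<and> brick E s t d M"
  then have lz: "loops_zero E s t d M" using brick_loops_zero by blast
  have "nonloops E s t \<subseteq> E" unfolding nonloops_def by blast
  then show "loops_zero E s t d M" "A_module (nonloops E s t) s t d M"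
    "brick (nonloops E s t) s t d M" "\<forall>e\<in>E. extend_by_zero s t d M e = M e"
    using lz H A_module_subset brick_nonloops_iff[OF lz] extend_by_zero_eq_if_loops_zero[OF lz]
    by blast+
next
  fix d and N :: "'e \<Rightarrow> 'k mat"
  assume H: "A_module (nonloops E s t) s t d N \<and> brick (nonloops E s t) s t d N"
  have "brick (nonloops E s t) s t d (extend_by_zero s t d N)"
    using H unfolding brick_def rep_hom_nonloops_extend_by_zero by simp
  then show "A_module E s t d (extend_by_zero s t d N)" "brick E s t d (extend_by_zero s t d N)"
    using H A_module_extend_by_zero brick_nonloops_iff[OF loops_zero_extend_by_zero] by blast+
  show "\<forall>e\<in>nonloops E s t. extend_by_zero s t d N e = N e"
    unfolding nonloops_def extend_by_zero_def by auto
next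
  fix d d' and M N :: "'e \<Rightarrow> 'k mat"
  assume "A_module E s t d M \<and> brick E s t d M \<and> A_module E s t d' N \<and> brick E s t d' N"
  then show "{\<phi>. rep_hom E s t d M d' N \<phi>} = {\<phi>. rep_hom (nonloops E s t) s t d M d' N \<phi>}"
    using rep_hom_nonloops_iff brick_loops_zero by blast
qed

end
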